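(* Let $f:\mathbb{R}^n\to\mathbb{R}$ be twice continuously differentiable with $L$-Lipschitz gradient, let $\varphi_s:\mathbb{R}^{n_s}\to\mathbb{R}$ ($s=1,\dots,p$) be twice continuously differentiable and $\mu_s$-strongly convex ($\mu_s>0$), and $\mu=\min_s\mu_s$. For step size $0<\alpha<\frac{\mu}{L}$, the map $\psi=\psi_p\circ\psi_{p-1}\circ\cdots\circ\psi_1:\mathbb{R}^n\to\mathbb{R}^n$ is a diffeomorphism.
   Context: $\|\nabla f(x)-\nabla f(y)\|\le L\|x-y\|$ for all $x,y$, $L>0$. The variable is partitioned as $x=(x(1),\dots,x(p))$, $x(s)\in\mathbb{R}^{n_s}$, $\sum_sn_s=n$; $U_s\in\mathbb{R}^{n\times n_s}$ is the $s$-th block-column of $I_n$ and $\nabla_sf(x)=U_s^T\nabla f(x)$. Strong convexity: $\varphi_s(y)\ge\varphi_s(x)+\langle\nabla\varphi_s(x),y-x\rangle+\frac{\mu_s}2\|y-x\|^2$; then $\nabla\varphi_s$ is invertible with inverse $[\nabla\varphi_s]^{-1}$. Define $\psi_s(x)=(I_n-U_sU_s^T)x+U_s[\nabla\varphi_s]^{-1}\big(\nabla\varphi_s(x(s))-\alpha\nabla_sf(x)\big)$ (one block step of block mirror descent). *)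

theory Defs
  imports "HOL-Analysis.Analysis"
begin

definition grad :: "('a::euclidean_space \<Rightarrow> real) \<Rightarrow> 'a \<Rightarrow> 'a" where
  "grad f x = (THE D. GDERIV f x :> D)"

definition C2 :: "('a::euclidean_space \<Rightarrow> real) \<Rightarrow> bool" where
  "C2 f \<longleftrightarrow> (\<exists>g H. (\<forall>x. GDERIV f x :> g x) \<and>
                    (\<forall>x. (g has_derivative blinfun_apply (H x)) (at x)) \<and>
                    continuous_on UNIV H)"

definition C1_map :: "('a::euclidean_space \<Rightarrow> 'b::euclidean_space) \<Rightarrow> bool" where
  "C1_map F \<longleftrightarrow> (\<exists>D. (\<forall>x. (F has_derivative blinfun_apply (D x)) (at x)) \<and> continuous_on UNIV D)"

definition diffeomorphism :: "('a::euclidean_space \<Rightarrow> 'a) \<Rightarrow> bool" where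
  "diffeomorphism F \<longleftrightarrow> bij F \<and> C1_map F \<and> C1_map (inv F)"

text \<open>The coordinates of real^'n are partitioned into blocks
  by blk :: 'n \<Rightarrow> nat: coordinate i belongs to block blk i.
  The block space R^{n_s} is identified with the coordinate subspace blockspace blk s
  (via U_s), and U_s U_s^T is the coordinate projection blockproj blk s.\<close>
definition blockspace :: "('n \<Rightarrow> nat) \<Rightarrow> nat \<Rightarrow> (real^'n) set" where
  "blockspace blk s = {x. \<forall>i. blk i \<noteq> s \<longrightarrow> x $ i = 0}"

definition blockproj :: "('n \<Rightarrow> nat) \<Rightarrow> nat \<Rightarrow> real^'n \<Rightarrow> real^'n" where
  "blockproj blk s x = (\<chi> i. if blk i = s then x $ i else 0)"

text \<open>One block step of block mirror descent:
  psi_s(x) = (I - U_s U_s^T) x + U_s [grad phi_s]^{-1}(grad phi_s(x(s)) - alpha grad_s f(x)).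
  Here phi s is phi_s composed with U_s^T (a function on real^'n depending only on the
  s-th block), so grad (phi s) = U_s (grad phi_s) U_s^T, and
  U_s [grad phi_s]^{-1} U_s^T is the inverse of grad (phi s) restricted to the block space.\<close>
definition bmd_step ::
  "('n \<Rightarrow> nat) \<Rightarrow> (real^'n \<Rightarrow> real) \<Rightarrow> (nat \<Rightarrow> real^'n \<Rightarrow> real) \<Rightarrow> real \<Rightarrow> nat \<Rightarrow> real^'n \<Rightarrow> real^'n" where
  "bmd_step blk f phi \<alpha> s x =
     (x - blockproj blk s x) +
     inv_into (blockspace blk s) (grad (phi s))
       (grad (phi s) (blockproj blk s x) - \<alpha> *\<^sub>R blockproj blk s (grad f x))"

text \<open>psi = psi_{p-1} o ... o psi_0 (blocks indexed 0..p-1).\<close>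
primrec bmd_comp ::
  "('n \<Rightarrow> nat) \<Rightarrow> (real^'n \<Rightarrow> real) \<Rightarrow> (nat \<Rightarrow> real^'n \<Rightarrow> real) \<Rightarrow> real \<Rightarrow> nat \<Rightarrow> real^'n \<Rightarrow> real^'n" where
  "bmd_comp blk f phi \<alpha> 0 = id"
| "bmd_comp blk f phi \<alpha> (Suc k) = bmd_step blk f phi \<alpha> k \<circ> bmd_comp blk f phi \<alpha> k"

end

theory Submission
  imports Defs
begin

text \<open>For a step size \<open>a\<close> consider the map
  \<open>\<Theta>\<^sub>a(x) = \<mu> (x - x(s)) + \<nabla>\<phi>\<^sub>s(x(s)) - a \<nabla>\<^sub>sf(x)\<close> on \<open>\<real>\<^sup>n\<close>, where \<open>x(s)\<close> is the
  projection onto block \<open>s\<close>. Strong convexity of \<open>\<phi>\<^sub>s\<close> and the Lipschitz bound on \<open>\<nabla>f\<close>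
  make \<open>\<Theta>\<^sub>a\<close> strongly monotone with modulus \<open>\<mu> - a L\<close>, which is positive for \<open>a < \<mu>/L\<close>.
  A strongly monotone \<open>C\<^sup>1\<close> map of \<open>\<real>\<^sup>n\<close> is a diffeomorphism: it is injective with closed
  range, its range is open by the inverse function theorem, and the derivatives of its inverse
  are inverses of uniformly coercive operators, hence vary continuously. Finally the block step
  satisfies \<open>\<psi>\<^sub>s = \<Theta>\<^sub>0\<^sup>-\<^sup>1 \<circ> \<Theta>\<^sub>\<alpha>\<close>, and \<open>\<psi>\<close> is a composition of such steps.\<close>

section \<open>Continuously differentiable maps\<close>

lemma C1_map_comp:
  fixes F :: "'a::euclidean_space \<Rightarrow> 'b::euclidean_space" and G :: "'c::euclidean_space \<Rightarrow> 'a"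
  assumes "C1_map F" "C1_map G"
  shows "C1_map (F \<circ> G)"
proof -
  obtain DF where DF: "\<And>x. (F has_derivative blinfun_apply (DF x)) (at x)" "continuous_on UNIV DF"
    using assms(1) unfolding C1_map_def by blast
  obtain DG where DG: "\<And>x. (G has_derivative blinfun_apply (DG x)) (at x)" "continuous_on UNIV DG"
    using assms(2) unfolding C1_map_def by blast
  have "continuous_on UNIV G"
    using DG(1) has_derivative_continuous continuous_at_imp_continuous_on by blast
  then have "continuous_on UNIV (\<lambda>x. DF (G x) o\<^sub>L DG x)"
    by (intro continuous_intros DG(2) continuous_on_compose2[OF DF(2)]) auto
  moreover have "(F \<circ> G has_derivative blinfun_apply (DF (G x) o\<^sub>L DG x)) (at x)" for x
    using diff_chain_at[OF DG(1) DF(1)] by (simp add: blinfun_compose.rep_eq)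
  ultimately show ?thesis
    unfolding C1_map_def by (intro exI[of _ "\<lambda>x. DF (G x) o\<^sub>L DG x"]) blast
qed

lemma diffeomorphism_id: "diffeomorphism (id :: 'a::euclidean_space \<Rightarrow> 'a)"
  unfolding diffeomorphism_def C1_map_def
  by (auto intro!: exI[where x="\<lambda>_. id_blinfun"] simp: inv_id bij_id)
    (simp add: id_def)

lemma diffeomorphism_comp:
  fixes F G :: "'a::euclidean_space \<Rightarrow> 'a"
  assumes "diffeomorphism F" "diffeomorphism G"
  shows "diffeomorphism (F \<circ> G)"
  using assms unfolding diffeomorphism_def
  by (simp add: bij_comp C1_map_comp o_inv_distrib)

lemma diffeomorphism_inv:
  fixes F :: "'a::euclidean_space \<Rightarrow> 'a"
  assumes "diffeomorphism F"
  shows "diffeomorphism (inv F)"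
  using assms unfolding diffeomorphism_def
  by (simp add: bij_imp_bij_inv inv_inv_eq)

lemma C1_map_linear:
  fixes F :: "'a::euclidean_space \<Rightarrow> 'b::euclidean_space"
  assumes "linear F"
  shows "C1_map F"
proof -
  have "bounded_linear F"
    using assms linear_conv_bounded_linear by blast
  then have "(F has_derivative blinfun_apply (Blinfun F)) (at x)" for x
    by (simp add: bounded_linear_Blinfun_apply bounded_linear_imp_has_derivative)
  then show ?thesis
    unfolding C1_map_def by (intro exI[of _ "\<lambda>_. Blinfun F"]) simp
qed

lemma C1_map_add:
  fixes F G :: "'a::euclidean_space \<Rightarrow> 'b::euclidean_space"
  assumes "C1_map F" "C1_map G"
  shows "C1_map (\<lambda>x. F x + G x)"
proof -
  obtain DF DG where "\<And>x. (F has_derivative blinfun_apply (DF x)) (at x)" "continuous_on UNIV DF"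
    "\<And>x. (G has_derivative blinfun_apply (DG x)) (at x)" "continuous_on UNIV DG"
    using assms unfolding C1_map_def by blast
  moreover have "blinfun_apply (DF x + DG x) = (\<lambda>h. DF x h + DG x h)" for x
    by (simp add: fun_eq_iff blinfun.add_left)
  ultimately show ?thesis
    unfolding C1_map_def
    by (intro exI[of _ "\<lambda>x. DF x + DG x"]) (auto intro!: continuous_intros has_derivative_add)
qed

lemma C1_map_scaleR:
  fixes F :: "'a::euclidean_space \<Rightarrow> 'b::euclidean_space"
  assumes "C1_map F"
  shows "C1_map (\<lambda>x. c *\<^sub>R F x)"
proof -
  obtain D where "\<And>x. (F has_derivative blinfun_apply (D x)) (at x)" "continuous_on UNIV D"
    using assms unfolding C1_map_def by blast
  moreover have "blinfun_apply (c *\<^sub>R D x) = (\<lambda>h. c *\<^sub>R D x h)" for x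
    by (simp add: fun_eq_iff blinfun.scaleR_left)
  ultimately show ?thesis
    unfolding C1_map_def
    by (intro exI[of _ "\<lambda>x. c *\<^sub>R D x"]) (auto intro!: continuous_intros has_derivative_scaleR_right)
qed

lemma C1_map_diff:
  fixes F G :: "'a::euclidean_space \<Rightarrow> 'b::euclidean_space"
  assumes "C1_map F" "C1_map G"
  shows "C1_map (\<lambda>x. F x - G x)"
  using C1_map_add[OF assms(1) C1_map_scaleR[OF assms(2), of "-1"]] by simp

section \<open>Strongly monotone maps\<close>

definition strongly_monotone :: "real \<Rightarrow> ('a::real_inner \<Rightarrow> 'a) \<Rightarrow> bool" where
  "strongly_monotone c F \<longleftrightarrow> (\<forall>x y. c * (norm (x - y))\<^sup>2 \<le> (F x - F y) \<bullet> (x - y))"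

lemma strongly_monotone_linear_iff:
  assumes "linear A"
  shows "strongly_monotone c A \<longleftrightarrow> (\<forall>h. c * (norm h)\<^sup>2 \<le> A h \<bullet> h)"
  unfolding strongly_monotone_def linear_diff[OF assms, symmetric]
  by (metis diff_zero)

lemma strongly_monotone_expanding:
  assumes "strongly_monotone c F"
  shows "c * norm (x - y) \<le> norm (F x - F y)"
proof (cases "x = y")
  case False
  have "c * (norm (x - y))\<^sup>2 \<le> norm (F x - F y) * norm (x - y)"
    using assms norm_cauchy_schwarz[of "F x - F y" "x - y"]
    unfolding strongly_monotone_def by (meson order_trans)
  then show ?thesis
    using False by (simp add: power2_eq_square)
qed simp

text \<open>The difference quotients of \<open>t \<mapsto> F (x + t h) \<bullet> h\<close> at \<open>0\<^sup>+\<close> are bounded below by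
  \<open>c \<parallel>h\<parallel>\<^sup>2\<close>.\<close>
lemma has_derivative_strongly_monotone:
  fixes F :: "'a::euclidean_space \<Rightarrow> 'a"
  assumes der: "(F has_derivative A) (at x)" and mono: "strongly_monotone c F"
  shows "strongly_monotone c A"
proof -
  have lin: "linear A"
    using der has_derivative_linear by blast
  have "c * (norm h)\<^sup>2 \<le> A h \<bullet> h" for h
  proof -
    have "((\<lambda>t::real. F (x + t *\<^sub>R h)) has_derivative (\<lambda>t. A (t *\<^sub>R h))) (at 0)"
    proof -
      have "((\<lambda>t::real. x + t *\<^sub>R h) has_derivative (\<lambda>t. t *\<^sub>R h)) (at 0)"
        by (auto intro!: derivative_eq_intros)
      from diff_chain_at[OF this] der show ?thesis
        by (simp add: o_def)
    qed
    then have "((\<lambda>t::real. F (x + t *\<^sub>R h) \<bullet> h) has_derivative (\<lambda>t. t * (A h \<bullet> h))) (at 0)"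
      using has_derivative_inner_left by (force simp: linear_scale[OF lin])
    then have field: "((\<lambda>t::real. F (x + t *\<^sub>R h) \<bullet> h) has_field_derivative (A h \<bullet> h)) (at 0)"
      by (simp add: has_field_derivative_def mult_commute_abs)
    have lim: "((\<lambda>t. (F (x + t *\<^sub>R h) \<bullet> h - F (x + 0 *\<^sub>R h) \<bullet> h) / (t - 0)) \<longlongrightarrow> A h \<bullet> h)
                      (at_right 0)"
      using has_field_derivative_at_within[OF field, of "{0<..}"]
      unfolding has_field_derivative_iff .
    have "\<forall>\<^sub>F t in at_right 0. c * (norm h)\<^sup>2 \<le> (F (x + t *\<^sub>R h) \<bullet> h - F (x + 0 *\<^sub>R h) \<bullet> h) / (t - 0)"
    proof (rule eventually_at_rightI[of 0 1])
      fix t :: real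
      assume t: "t \<in> {0<..<1}"
      have "c * (norm (t *\<^sub>R h))\<^sup>2 \<le> (F (x + t *\<^sub>R h) - F x) \<bullet> (t *\<^sub>R h)"
        using mono unfolding strongly_monotone_def by (metis add_diff_cancel_left')
      then have "t * (t * (c * (norm h)\<^sup>2)) \<le> t * ((F (x + t *\<^sub>R h) - F x) \<bullet> h)"
        using t by (simp add: power2_eq_square algebra_simps)
      then show "c * (norm h)\<^sup>2 \<le> (F (x + t *\<^sub>R h) \<bullet> h - F (x + 0 *\<^sub>R h) \<bullet> h) / (t - 0)"
        using t by (simp add: inner_diff_left pos_le_divide_eq mult.commute)
    qed simp
    then show ?thesis
      by (rule tendsto_lowerbound[OF lim _ trivial_limit_at_right_real])
  qed
  then show ?thesis
    using strongly_monotone_linear_iff[OF lin] by blast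
qed

lemma expanding_imp_inj:
  assumes "c > 0" and exp: "\<And>x y. c * norm (x - y) \<le> norm (F x - F y)"
  shows "inj F"
proof (rule injI)
  fix x y
  assume "F x = F y"
  then show "x = y"
    using exp[of x y] \<open>c > 0\<close> by (simp add: mult_le_0_iff)
qed

lemma closed_range_expanding:
  fixes F :: "'a::banach \<Rightarrow> 'b::real_normed_vector"
  assumes "c > 0" and exp: "\<And>x y. c * norm (x - y) \<le> norm (F x - F y)"
    and cont: "continuous_on UNIV F"
  shows "closed (range F)"
  unfolding closed_sequential_limits
proof (intro allI impI, elim conjE)
  fix ys l
  assume "\<forall>n. ys n \<in> range F" and lim: "ys \<longlonglongrightarrow> l"
  then obtain z where z: "ys = (\<lambda>n. F (z n))"
    by (metis image_iff)
  have "Cauchy z"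
    unfolding Cauchy_def
  proof (intro allI impI)
    fix e :: real
    assume "e > 0"
    then obtain M where M: "\<forall>m\<ge>M. \<forall>n\<ge>M. dist (ys m) (ys n) < e * c"
      using LIMSEQ_imp_Cauchy[OF lim] \<open>c > 0\<close> unfolding Cauchy_def by (meson mult_pos_pos)
    have "dist (z m) (z n) < e" if "m \<ge> M" "n \<ge> M" for m n
    proof -
      have "c * dist (z m) (z n) < c * e"
        using M that exp[of "z m" "z n"] by (fastforce simp: z dist_norm mult.commute)
      then show ?thesis
        using \<open>c > 0\<close> by simp
    qed
    then show "\<exists>M. \<forall>m\<ge>M. \<forall>n\<ge>M. dist (z m) (z n) < e"
      by blast
  qed
  then obtain x where "z \<longlonglongrightarrow> x"
    using Cauchy_convergent_iff convergent_def by blast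
  then have "ys \<longlonglongrightarrow> F x"
    unfolding z by (rule continuous_on_tendsto_compose[OF cont]) auto
  then show "l \<in> range F"
    using lim LIMSEQ_unique by blast
qed

lemma strongly_monotone_blinfun_inverse:
  fixes A :: "'a::euclidean_space \<Rightarrow>\<^sub>L 'a"
  assumes "c > 0" and mono: "strongly_monotone c (blinfun_apply A)"
  shows "bij (blinfun_apply A)"
    and "blinfun_apply (Blinfun (inv (blinfun_apply A))) = inv (blinfun_apply A)"
    and "c * norm (inv (blinfun_apply A) k) \<le> norm k"
proof -
  have lin: "linear (blinfun_apply A)"
    by (simp add: blinfun.bounded_linear_right bounded_linear.linear)
  have inj: "inj (blinfun_apply A)"
    using expanding_imp_inj[OF \<open>c > 0\<close> strongly_monotone_expanding[OF mono]] .
  then show bij: "bij (blinfun_apply A)"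
    using eucl.linear_injective_imp_surjective[OF lin] by (simp add: bij_def)
  have "linear (inv (blinfun_apply A))"
    using eucl.inj_linear_imp_inv_linear[OF lin inj] .
  then show "blinfun_apply (Blinfun (inv (blinfun_apply A))) = inv (blinfun_apply A)"
    by (simp add: bounded_linear_Blinfun_apply linear_conv_bounded_linear)
  show "c * norm (inv (blinfun_apply A) k) \<le> norm k"
    using strongly_monotone_expanding[OF mono, of "inv (blinfun_apply A) k" 0] bij
    by (simp add: linear_0[OF lin] bij_is_surj surj_f_inv_f)
qed

text \<open>On operators sharing a strong monotonicity modulus, inversion is Lipschitz:
  \<open>A\<^sup>-\<^sup>1 - B\<^sup>-\<^sup>1 = A\<^sup>-\<^sup>1 (B - A) B\<^sup>-\<^sup>1\<close>.\<close>
lemma norm_Blinfun_inv_diff_le: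
  fixes A B :: "'a::euclidean_space \<Rightarrow>\<^sub>L 'a"
  assumes "c > 0" "strongly_monotone c (blinfun_apply A)" "strongly_monotone c (blinfun_apply B)"
  shows "norm (Blinfun (inv (blinfun_apply A)) - Blinfun (inv (blinfun_apply B))) \<le> norm (A - B) / c\<^sup>2"
proof (rule norm_blinfun_bound)
  note A = strongly_monotone_blinfun_inverse[OF assms(1,2)]
  note B = strongly_monotone_blinfun_inverse[OF assms(1,3)]
  show "0 \<le> norm (A - B) / c\<^sup>2"
    by simp
  fix k
  define w where "w = inv (blinfun_apply B) k"
  have linA: "linear (inv (blinfun_apply A))"
    using A(2) blinfun.bounded_linear_right bounded_linear.linear by metis
  have "(Blinfun (inv (blinfun_apply A)) - Blinfun (inv (blinfun_apply B))) k
        = inv (blinfun_apply A) (B w) - inv (blinfun_apply A) (A w)"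
    using A(1) B(1) by (simp add: A(2) B(2) w_def blinfun.diff_left bij_is_inj bij_is_surj surj_f_inv_f)
  also have "\<dots> = inv (blinfun_apply A) ((B - A) w)"
    by (simp add: linear_diff[OF linA, symmetric] blinfun.diff_left)
  finally have "c * norm ((Blinfun (inv (blinfun_apply A)) - Blinfun (inv (blinfun_apply B))) k)
                \<le> norm ((B - A) w)"
    using A(3) by simp
  also have "\<dots> \<le> norm (B - A) * norm w"
    by (rule norm_blinfun)
  finally have "c * (c * norm ((Blinfun (inv (blinfun_apply A)) - Blinfun (inv (blinfun_apply B))) k))
                \<le> norm (B - A) * (c * norm w)"
    using \<open>c > 0\<close> by (simp add: mult_left_mono mult.left_commute)
  also have "\<dots> \<le> norm (B - A) * norm k"
    using B(3)[of k] by (simp add: w_def mult_left_mono)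
  finally show "norm ((Blinfun (inv (blinfun_apply A)) - Blinfun (inv (blinfun_apply B))) k)
                \<le> norm (A - B) / c\<^sup>2 * norm k"
    using \<open>c > 0\<close> by (simp add: norm_minus_commute power2_eq_square field_simps)
qed

lemma continuous_on_Blinfun_inv:
  fixes D :: "'b::metric_space \<Rightarrow> 'a::euclidean_space \<Rightarrow>\<^sub>L 'a"
  assumes cont: "continuous_on S D" and "c > 0"
    and mono: "\<And>x. x \<in> S \<Longrightarrow> strongly_monotone c (blinfun_apply (D x))"
  shows "continuous_on S (\<lambda>x. Blinfun (inv (blinfun_apply (D x))))"
proof -
  have "lipschitz_on (1 / c\<^sup>2) (D ` S) (\<lambda>A. Blinfun (inv (blinfun_apply A)))"
    unfolding lipschitz_on_def dist_norm
    using norm_Blinfun_inv_diff_le[OF \<open>c > 0\<close>] mono by auto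
  then show ?thesis
    using continuous_on_compose[OF cont lipschitz_on_continuous_on] by (simp add: o_def)
qed

lemma strongly_monotone_C1_imp_surj:
  fixes F :: "'a::euclidean_space \<Rightarrow> 'a" and D :: "'a \<Rightarrow> 'a \<Rightarrow>\<^sub>L 'a"
  assumes der: "\<And>x. (F has_derivative blinfun_apply (D x)) (at x)"
    and cont: "continuous_on UNIV D"
    and "c > 0" and mono: "strongly_monotone c F"
  shows "surj F"
proof -
  have "open (range F)"
  proof (subst open_subopen, intro ballI)
    fix y
    assume "y \<in> range F"
    then obtain x where y: "y = F x"
      by blast
    note inverse = strongly_monotone_blinfun_inverse[OF \<open>c > 0\<close> has_derivative_strongly_monotone[OF der mono]]
    have "Blinfun (inv (blinfun_apply (D x))) o\<^sub>L D x = id_blinfun"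
      using inverse(1,2) by (intro blinfun_eqI) (simp add: bij_is_inj)
    then obtain U V g where "open V" "F x \<in> V" "homeomorphism U V F g"
      using inverse_function_theorem[OF open_UNIV der cont UNIV_I] by metis
    then show "\<exists>T. open T \<and> y \<in> T \<and> T \<subseteq> range F"
      unfolding homeomorphism_def y by blast
  qed
  moreover have "closed (range F)"
    using closed_range_expanding[OF \<open>c > 0\<close> strongly_monotone_expanding[OF mono]]
      der has_derivative_continuous continuous_at_imp_continuous_on by blast
  ultimately show ?thesis
    using clopen[of "range F"] by blast
qed

lemma strongly_monotone_C1_imp_diffeomorphism:
  fixes F :: "'a::euclidean_space \<Rightarrow> 'a"
  assumes "C1_map F" and "c > 0" and mono: "strongly_monotone c F"
  shows "diffeomorphism F"
proof -
  obtain D where der: "\<And>x. (F has_derivative blinfun_apply (D x)) (at x)"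
    and cont: "continuous_on UNIV D"
    using \<open>C1_map F\<close> unfolding C1_map_def by blast
  have mono_D: "strongly_monotone c (blinfun_apply (D x))" for x
    using has_derivative_strongly_monotone[OF der mono] .
  note inverse = strongly_monotone_blinfun_inverse[OF \<open>c > 0\<close> mono_D]
  have bij: "bij F"
    using expanding_imp_inj[OF \<open>c > 0\<close> strongly_monotone_expanding[OF mono]]
      strongly_monotone_C1_imp_surj[OF der cont \<open>c > 0\<close> mono] by (simp add: bij_def)
  define g where "g = inv F"
  have Fg: "F (g y) = y" for y
    unfolding g_def using bij by (simp add: bij_is_surj surj_f_inv_f)
  have "lipschitz_on (1 / c) UNIV g"
    unfolding lipschitz_on_def dist_norm
    using strongly_monotone_expanding[OF mono, of "g _" "g _"] \<open>c > 0\<close>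
    by (auto simp: Fg field_simps)
  then have cont_g: "continuous_on UNIV g"
    by (rule lipschitz_on_continuous_on)
  have "(g has_derivative blinfun_apply (Blinfun (inv (blinfun_apply (D (g y)))))) (at y)" for y
  proof (rule has_derivative_inverse_basic[OF der[of "g y"] _ _ _ open_UNIV UNIV_I Fg])
    show "blinfun_apply (Blinfun (inv (blinfun_apply (D (g y))))) \<circ> blinfun_apply (D (g y)) = id"
      using inverse(1,2) by (simp add: bij_is_inj fun_eq_iff)
    show "isCont g y"
      using cont_g by (simp add: continuous_on_eq_continuous_at)
  qed (rule blinfun.bounded_linear_right)
  moreover have "continuous_on UNIV (\<lambda>y. Blinfun (inv (blinfun_apply (D (g y)))))"
    using continuous_on_Blinfun_inv[OF continuous_on_compose2[OF cont cont_g] \<open>c > 0\<close> mono_D]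
    by auto
  ultimately have "C1_map (inv F)"
    unfolding C1_map_def g_def by (intro exI[of _ "\<lambda>y. Blinfun (inv (blinfun_apply (D (g y))))"]) (simp add: g_def)
  then show ?thesis
    unfolding diffeomorphism_def using bij \<open>C1_map F\<close> by blast
qed

section \<open>Gradients and block coordinates\<close>

lemma grad_eqI:
  fixes f :: "'a::euclidean_space \<Rightarrow> real"
  assumes "GDERIV f x :> d"
  shows "grad f x = d"
  unfolding grad_def
proof (rule the_equality)
  fix d'
  assume "GDERIV f x :> d'"
  then have "(\<lambda>h. h \<bullet> d') = (\<lambda>h. h \<bullet> d)"
    using assms unfolding gderiv_def by (rule has_derivative_unique)
  then have "(d' - d) \<bullet> (d' - d) = 0"
    by (metis inner_diff_right right_minus_eq inner_commute)
  then show "d' = d"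
    by simp
qed (rule assms)

lemma C2_gradE:
  fixes f :: "'a::euclidean_space \<Rightarrow> real"
  assumes "C2 f"
  obtains "\<And>x. GDERIV f x :> grad f x" and "C1_map (grad f)"
proof -
  obtain g H where g: "\<And>x. GDERIV f x :> g x" "\<And>x. (g has_derivative blinfun_apply (H x)) (at x)"
    "continuous_on UNIV H"
    using assms unfolding C2_def by blast
  have "grad f = g"
    using grad_eqI[OF g(1)] by auto
  then show ?thesis
    using that g unfolding C1_map_def by blast
qed

lemma blockproj_in_blockspace: "blockproj blk s x \<in> blockspace blk s"
  by (simp add: blockproj_def blockspace_def)

lemma blockproj_eq_self: "x \<in> blockspace blk s \<Longrightarrow> blockproj blk s x = x"
  by (simp add: blockproj_def blockspace_def vec_eq_iff)

lemma linear_blockproj: "linear (blockproj blk s)"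
  by (rule linearI) (auto simp: blockproj_def vec_eq_iff)

lemma subspace_blockspace: "subspace (blockspace blk s)"
  by (auto simp: subspace_def blockspace_def)

lemma inner_blockproj_right:
  "b \<in> blockspace blk s \<Longrightarrow> b \<bullet> blockproj blk s d = b \<bullet> d"
  unfolding inner_vec_def blockspace_def blockproj_def by (rule sum.cong) auto

lemma inner_blockproj_complement: "blockproj blk s d \<bullet> (d - blockproj blk s d) = 0"
  unfolding inner_vec_def blockproj_def by (rule sum.neutral) auto

lemma norm_blockproj_pythagoras:
  "(norm d)\<^sup>2 = (norm (blockproj blk s d))\<^sup>2 + (norm (d - blockproj blk s d))\<^sup>2"
  using norm_add_Pythagorean[of "blockproj blk s d" "d - blockproj blk s d"]
    inner_blockproj_complement[of blk s d]
  by (simp add: orthogonal_def)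

lemma norm_blockproj_le: "norm (blockproj blk s d) \<le> norm d"
  using norm_blockproj_pythagoras[of d blk s] by (simp add: power2_le_imp_le)

lemma blockproj_idem: "blockproj blk s (blockproj blk s x) = blockproj blk s x"
  by (simp add: blockproj_in_blockspace blockproj_eq_self)

text \<open>A function depending only on block \<open>s\<close> is constant along the other coordinate axes,
  so the other components of its gradient vanish.\<close>
lemma grad_in_blockspace:
  fixes \<phi> :: "real^'n \<Rightarrow> real"
  assumes block: "\<And>x. \<phi> x = \<phi> (blockproj blk s x)" and gd: "GDERIV \<phi> y :> grad \<phi> y"
  shows "grad \<phi> y \<in> blockspace blk s"
  unfolding blockspace_def
proof (intro CollectI allI impI)
  fix i
  assume "blk i \<noteq> s"
  then have "blockproj blk s (y + t *\<^sub>R axis i 1) = blockproj blk s y" for t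
    by (simp add: blockproj_def vec_eq_iff axis_def)
  then have "\<phi> (y + t *\<^sub>R axis i 1) = \<phi> y" for t
    using block by metis
  then have const: "(\<lambda>t::real. \<phi> (y + t *\<^sub>R axis i 1)) = (\<lambda>t. \<phi> y)"
    by auto
  have "((\<lambda>t::real. y + t *\<^sub>R axis i 1) has_derivative (\<lambda>t. t *\<^sub>R axis i 1)) (at 0)"
    by (auto intro!: derivative_eq_intros)
  from diff_chain_at[OF this, of \<phi> "\<lambda>h. h \<bullet> grad \<phi> y"] gd
  have "((\<lambda>t::real. \<phi> (y + t *\<^sub>R axis i 1)) has_derivative (\<lambda>t. (t *\<^sub>R axis i 1) \<bullet> grad \<phi> y)) (at 0)"
    by (simp add: gderiv_def o_def)
  then have "((\<lambda>t::real. \<phi> y) has_derivative (\<lambda>t. (t *\<^sub>R axis i 1) \<bullet> grad \<phi> y)) (at 0)"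
    unfolding const .
  then have "(\<lambda>t::real. (t *\<^sub>R axis i 1) \<bullet> grad \<phi> y) = (\<lambda>t. 0)"
    by (rule has_derivative_unique[OF _ has_derivative_const])
  then have "(1 *\<^sub>R axis i 1) \<bullet> grad \<phi> y = 0"
    by meson
  then show "grad \<phi> y $ i = 0"
    unfolding scaleR_one inner_axis' by simp
qed

lemma strongly_convex_imp_grad_strongly_monotone:
  fixes \<phi> :: "'a::real_inner \<Rightarrow> real"
  assumes sc: "\<And>x y. x \<in> S \<Longrightarrow> y \<in> S \<Longrightarrow> \<phi> y \<ge> \<phi> x + G x \<bullet> (y - x) + \<mu> / 2 * (norm (y - x))\<^sup>2"
    and "u \<in> S" "v \<in> S"
  shows "\<mu> * (norm (u - v))\<^sup>2 \<le> (G u - G v) \<bullet> (u - v)"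
proof -
  have "\<phi> u \<ge> \<phi> v + G v \<bullet> (u - v) + \<mu> / 2 * (norm (u - v))\<^sup>2"
    "\<phi> v \<ge> \<phi> u - G u \<bullet> (u - v) + \<mu> / 2 * (norm (u - v))\<^sup>2"
    using sc[of v u] sc[of u v] \<open>u \<in> S\<close> \<open>v \<in> S\<close>
    by (simp_all add: norm_minus_commute inner_diff_right)
  then show ?thesis
    by (simp add: inner_diff_left)
qed

section \<open>Block mirror descent steps\<close>

text \<open>With \<open>G = \<nabla>\<phi>\<^sub>s\<close> and \<open>V = \<nabla>f\<close> this is the map \<open>\<Theta>\<^sub>a\<close>.\<close>
definition block_dual_map ::
  "('n \<Rightarrow> nat) \<Rightarrow> nat \<Rightarrow> real \<Rightarrow> (real^'n \<Rightarrow> real^'n) \<Rightarrow> real \<Rightarrow> (real^'n \<Rightarrow> real^'n) \<Rightarrow> real^'n \<Rightarrow> real^'n"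
  where "block_dual_map blk s \<mu> G \<alpha> V x =
    \<mu> *\<^sub>R (x - blockproj blk s x) + G (blockproj blk s x) - \<alpha> *\<^sub>R blockproj blk s (V x)"

lemma C1_map_block_dual_map:
  assumes "C1_map G" "C1_map V"
  shows "C1_map (block_dual_map blk s \<mu> G \<alpha> V)"
proof -
  have P: "C1_map (blockproj blk s)"
    by (rule C1_map_linear[OF linear_blockproj])
  have off_block: "C1_map (\<lambda>x. x - blockproj blk s x)"
    by (rule C1_map_diff[OF C1_map_linear[OF linear_id[unfolded id_def]] P])
  have "C1_map (\<lambda>x. G (blockproj blk s x))" "C1_map (\<lambda>x. blockproj blk s (V x))"
    using C1_map_comp[OF assms(1) P] C1_map_comp[OF P assms(2)] by (simp_all add: o_def)
  from C1_map_diff[OF C1_map_add[OF C1_map_scaleR[OF off_block] this(1)] C1_map_scaleR[OF this(2)]]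
  show ?thesis
    unfolding block_dual_map_def .
qed

text \<open>Split \<open>d = x - y\<close> into its block-\<open>s\<close> part and the rest: the first two terms contribute
  \<open>\<mu>\<close> times the squared norms of the two parts, the gradient term loses at most \<open>\<alpha> L \<parallel>d\<parallel>\<^sup>2\<close>.\<close>
lemma block_dual_map_strongly_monotone:
  fixes blk :: "'n::finite \<Rightarrow> nat"
  assumes G_block: "\<And>x. G x \<in> blockspace blk s"
    and G_mono: "\<And>u v. u \<in> blockspace blk s \<Longrightarrow> v \<in> blockspace blk s \<Longrightarrow>
                   \<mu> * (norm (u - v))\<^sup>2 \<le> (G u - G v) \<bullet> (u - v)"
    and V_lip: "\<And>x y. norm (V x - V y) \<le> L * norm (x - y)"
    and "\<alpha> \<ge> 0"
  shows "strongly_monotone (\<mu> - \<alpha> * L) (block_dual_map blk s \<mu> G \<alpha> V)"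
  unfolding strongly_monotone_def
proof (intro allI)
  fix x y :: "real^'n"
  define P :: "real^'n \<Rightarrow> real^'n" where "P = blockproj blk s"
  define d where "d = x - y"
  have lin: "linear P"
    unfolding P_def by (rule linear_blockproj)
  have Pd: "P x - P y = P d"
    unfolding d_def by (simp add: linear_diff[OF lin])
  have "\<mu> *\<^sub>R (x - P x) - \<mu> *\<^sub>R (y - P y) = \<mu> *\<^sub>R (d - P d)"
    using Pd by (simp add: d_def algebra_simps)
  moreover have "(d - P d) \<bullet> d = (d - P d) \<bullet> (d - P d)"
    using inner_blockproj_complement[of blk s d]
    by (simp add: P_def inner_diff_right inner_commute)
  ultimately have off_block: "(\<mu> *\<^sub>R (x - P x) - \<mu> *\<^sub>R (y - P y)) \<bullet> d = \<mu> * (norm (d - P d))\<^sup>2"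
    by (simp add: power2_norm_eq_inner)
  have "G (P x) - G (P y) \<in> blockspace blk s"
    by (intro subspace_diff[OF subspace_blockspace] G_block)
  then have "(G (P x) - G (P y)) \<bullet> d = (G (P x) - G (P y)) \<bullet> (P x - P y)"
    unfolding Pd by (simp add: P_def inner_blockproj_right)
  also have "\<dots> \<ge> \<mu> * (norm (P d))\<^sup>2"
    using G_mono[of "P x" "P y"] Pd by (simp add: P_def blockproj_in_blockspace)
  finally have on_block: "(G (P x) - G (P y)) \<bullet> d \<ge> \<mu> * (norm (P d))\<^sup>2" .
  have "(\<alpha> *\<^sub>R P (V x) - \<alpha> *\<^sub>R P (V y)) \<bullet> d = \<alpha> * (P (V x - V y) \<bullet> d)"
    by (simp add: linear_diff[OF lin] inner_diff_left right_diff_distrib)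
  also have "\<dots> \<le> \<alpha> * (norm (P (V x - V y)) * norm d)"
    using \<open>\<alpha> \<ge> 0\<close> by (intro mult_left_mono norm_cauchy_schwarz)
  also have "\<dots> \<le> \<alpha> * (L * norm d * norm d)"
    using \<open>\<alpha> \<ge> 0\<close> norm_blockproj_le[of blk s "V x - V y"] V_lip[of x y]
    by (intro mult_left_mono mult_right_mono) (auto simp: P_def d_def)
  finally have gradient: "(\<alpha> *\<^sub>R P (V x) - \<alpha> *\<^sub>R P (V y)) \<bullet> d \<le> \<alpha> * L * (norm d)\<^sup>2"
    by (simp add: power2_eq_square mult.assoc)
  have "(block_dual_map blk s \<mu> G \<alpha> V x - block_dual_map blk s \<mu> G \<alpha> V y) \<bullet> d
        = (\<mu> *\<^sub>R (x - P x) - \<mu> *\<^sub>R (y - P y)) \<bullet> d + (G (P x) - G (P y)) \<bullet> d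
          - (\<alpha> *\<^sub>R P (V x) - \<alpha> *\<^sub>R P (V y)) \<bullet> d"
    unfolding block_dual_map_def P_def inner_diff_left[symmetric] inner_add_left[symmetric]
    by (simp add: algebra_simps)
  moreover have "(\<mu> - \<alpha> * L) * (norm d)\<^sup>2 = \<mu> * (norm (P d))\<^sup>2 + \<mu> * (norm (d - P d))\<^sup>2 - \<alpha> * L * (norm d)\<^sup>2"
    using norm_blockproj_pythagoras[of d blk s] by (simp add: P_def algebra_simps)
  ultimately show "(\<mu> - \<alpha> * L) * (norm (x - y))\<^sup>2
             \<le> (block_dual_map blk s \<mu> G \<alpha> V x - block_dual_map blk s \<mu> G \<alpha> V y) \<bullet> (x - y)"
    using off_block on_block gradient unfolding d_def[symmetric] by linarith
qed

text \<open>The step \<open>\<psi>\<^sub>s\<close> keeps the blocks other than \<open>s\<close> and moves block \<open>s\<close> to the point where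
  \<open>\<nabla>\<phi>\<^sub>s\<close> takes the value \<open>\<nabla>\<phi>\<^sub>s(x(s)) - \<alpha> \<nabla>\<^sub>sf(x)\<close>; in terms of dual maps this says
  \<open>\<Theta>\<^sub>0 \<circ> \<psi>\<^sub>s = \<Theta>\<^sub>\<alpha>\<close>.\<close>
lemma bmd_step_eq_dual_maps:
  fixes blk :: "'n::finite \<Rightarrow> nat"
  assumes G_block: "\<And>x. grad (phi s) x \<in> blockspace blk s"
    and bij_dual: "bij (block_dual_map blk s \<mu> (grad (phi s)) 0 (grad f))"
  shows "bmd_step blk f phi \<alpha> s =
    inv (block_dual_map blk s \<mu> (grad (phi s)) 0 (grad f)) \<circ> block_dual_map blk s \<mu> (grad (phi s)) \<alpha> (grad f)"
proof
  fix x
  define G where "G = grad (phi s)"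
  define P :: "real^'n \<Rightarrow> real^'n" where "P = blockproj blk s"
  define B where "B = blockspace blk s"
  define \<Theta> where "\<Theta> a = block_dual_map blk s \<mu> G a (grad f)" for a
  have lin: "linear P"
    unfolding P_def by (rule linear_blockproj)
  have P_G: "P (G y) = G y" for y
    unfolding P_def G_def using G_block by (rule blockproj_eq_self)
  have P_off_block: "P (y - P y) = 0" for y
    unfolding P_def by (simp add: linear_diff[OF linear_blockproj] blockproj_idem)
  have "z \<in> G ` B" if "z \<in> B" for z
  proof -
    obtain y where "\<Theta> 0 y = z"
      using bij_dual unfolding \<Theta>_def G_def by (metis bij_is_surj surjD)
    then have "P z = P (\<mu> *\<^sub>R (y - P y) + G (P y))"
      by (simp add: \<Theta>_def block_dual_map_def P_def)
    then have "G (P y) = P z"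
      by (simp add: linear_add[OF lin] linear_scale[OF lin] P_off_block P_G)
    also have "P z = z"
      using that unfolding P_def B_def by (rule blockproj_eq_self)
    finally show ?thesis
      using blockproj_in_blockspace unfolding P_def B_def by blast
  qed
  moreover define z where "z = G (P x) - \<alpha> *\<^sub>R P (grad f x)"
  moreover have "z \<in> B"
    unfolding z_def B_def G_def P_def
    using G_block blockproj_in_blockspace
    by (intro subspace_diff[OF subspace_blockspace] subspace_scale[OF subspace_blockspace])
  ultimately have u: "inv_into B G z \<in> B" "G (inv_into B G z) = z"
    by (simp_all add: inv_into_into f_inv_into_f)
  have step: "bmd_step blk f phi \<alpha> s x = (x - P x) + inv_into B G z"
    by (simp add: bmd_step_def z_def G_def P_def B_def)
  have "P (bmd_step blk f phi \<alpha> s x) = inv_into B G z"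
    unfolding step using u(1)
    by (simp add: linear_add[OF lin] P_off_block, simp add: P_def B_def blockproj_eq_self)
  then have "\<Theta> 0 (bmd_step blk f phi \<alpha> s x) = \<Theta> \<alpha> x"
    using u(2) by (simp add: \<Theta>_def block_dual_map_def step z_def P_def[symmetric] algebra_simps)
  then show "bmd_step blk f phi \<alpha> s x = (inv (\<Theta> 0) \<circ> \<Theta> \<alpha>) x"
    using bij_dual by (simp add: \<Theta>_def G_def bij_is_inj inv_f_eq)
qed

lemma bmd_step_diffeomorphism:
  fixes blk :: "'n::finite \<Rightarrow> nat"
  assumes f_C2: "C2 f"
    and f_lip: "\<And>x y. norm (grad f x - grad f y) \<le> L * norm (x - y)"
    and phi_block: "\<And>x. phi s x = phi s (blockproj blk s x)"
    and phi_C2: "C2 (phi s)"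
    and phi_sc: "\<And>x y. x \<in> blockspace blk s \<Longrightarrow> y \<in> blockspace blk s \<Longrightarrow>
                  phi s y \<ge> phi s x + grad (phi s) x \<bullet> (y - x) + \<mu> / 2 * (norm (y - x))\<^sup>2"
    and "0 < \<mu>" "0 \<le> \<alpha>" "\<alpha> * L < \<mu>"
  shows "diffeomorphism (bmd_step blk f phi \<alpha> s)"
proof -
  obtain gd_phi: "\<And>x. GDERIV (phi s) x :> grad (phi s) x" and C1_phi: "C1_map (grad (phi s))"
    using C2_gradE[OF phi_C2] by blast
  obtain C1_f: "C1_map (grad f)"
    using C2_gradE[OF f_C2] by blast
  have G_block: "\<And>x. grad (phi s) x \<in> blockspace blk s"
    using grad_in_blockspace[OF phi_block gd_phi] .
  have dual: "diffeomorphism (block_dual_map blk s \<mu> (grad (phi s)) a (grad f))"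
    if "0 \<le> a" "a * L < \<mu>" for a
  proof (rule strongly_monotone_C1_imp_diffeomorphism)
    show "C1_map (block_dual_map blk s \<mu> (grad (phi s)) a (grad f))"
      using C1_phi C1_f by (rule C1_map_block_dual_map)
    show "strongly_monotone (\<mu> - a * L) (block_dual_map blk s \<mu> (grad (phi s)) a (grad f))"
      by (rule block_dual_map_strongly_monotone[OF G_block _ f_lip \<open>0 \<le> a\<close>])
        (rule strongly_convex_imp_grad_strongly_monotone[OF phi_sc])
  qed (use that in simp)
  have dual_0: "diffeomorphism (block_dual_map blk s \<mu> (grad (phi s)) 0 (grad f))"
    using dual[of 0] \<open>0 < \<mu>\<close> by simp
  then have "bij (block_dual_map blk s \<mu> (grad (phi s)) 0 (grad f))"
    unfolding diffeomorphism_def by blast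
  with G_block have eq: "bmd_step blk f phi \<alpha> s =
    inv (block_dual_map blk s \<mu> (grad (phi s)) 0 (grad f)) \<circ> block_dual_map blk s \<mu> (grad (phi s)) \<alpha> (grad f)"
    by (rule bmd_step_eq_dual_maps)
  show ?thesis
    unfolding eq by (intro diffeomorphism_comp diffeomorphism_inv dual_0 dual \<open>0 \<le> \<alpha>\<close> \<open>\<alpha> * L < \<mu>\<close>)
qed

theorem proposition5:
  fixes f :: "real^'n \<Rightarrow> real"
    and blk :: "'n \<Rightarrow> nat"
    and p :: nat
    and phi :: "nat \<Rightarrow> real^'n \<Rightarrow> real"
    and mu :: "nat \<Rightarrow> real"
    and L \<alpha> :: real
  assumes blocks: "blk ` UNIV = {..<p}"
    and f_C2: "C2 f"
    and L_pos: "L > 0"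
    and f_lip: "\<forall>x y. norm (grad f x - grad f y) \<le> L * norm (x - y)"
    and phi_block: "\<forall>s<p. \<forall>x. phi s x = phi s (blockproj blk s x)"
    and phi_C2: "\<forall>s<p. C2 (phi s)"
    and mu_pos: "\<forall>s<p. mu s > 0"
    and phi_sc: "\<forall>s<p. \<forall>x\<in>blockspace blk s. \<forall>y\<in>blockspace blk s.
                   phi s y \<ge> phi s x + grad (phi s) x \<bullet> (y - x) + mu s / 2 * (norm (y - x))\<^sup>2"
    and alpha_pos: "0 < \<alpha>"
    and alpha_small: "\<alpha> < Min (mu ` {..<p}) / L"
  shows "diffeomorphism (bmd_comp blk f phi \<alpha> p)"
proof -
  have step: "diffeomorphism (bmd_step blk f phi \<alpha> s)" if "s < p" for s
  proof -
    have "Min (mu ` {..<p}) \<le> mu s"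
      using that by (intro Min_le) auto
    then have "\<alpha> * L < mu s"
      using alpha_small L_pos by (simp add: pos_less_divide_eq)
    then show ?thesis
      using bmd_step_diffeomorphism[where phi = phi and s = s, OF f_C2 f_lip[rule_format] phi_block[rule_format, OF that]
          phi_C2[rule_format, OF that] phi_sc[rule_format, OF that] mu_pos[rule_format, OF that]
          less_imp_le[OF alpha_pos]]
      by blast
  qed
  have "k \<le> p \<Longrightarrow> diffeomorphism (bmd_comp blk f phi \<alpha> k)" for k
    by (induction k) (simp_all add: diffeomorphism_id diffeomorphism_comp step)
  then show ?thesis
    by simp
qed

end
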